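(* Let $H=kQ_H$ be a representation-finite hereditary (path) algebra over an algebraically closed field $k$, and let $f\colon X\to Y$ be a non-zero morphism between projective $H$-modules. Then there exist a sink $i$ and a source $j$ of $Q_H$ and morphisms $\alpha\colon P_i\to X$, $\beta\colon Y\to P_j$ such that $\beta f\alpha$ is a non-zero monomorphism.
   Context: $P_a$ denotes the indecomposable projective right $H$-module corresponding to the vertex $a$ of $Q_H$. A sink is a vertex with no outgoing arrows; a source is a vertex with no incoming arrows. *)

theory Defs
  imports "Jordan_Normal_Form.Matrix" "HOL-Computational_Algebra.Polynomial"
begin

definition alg_closed :: "'k::field itself \<Rightarrow> bool" where
  "alg_closed _ \<longleftrightarrow> (\<forall>p :: 'k poly. degree p > 0 \<longrightarrow> (\<exists>x. poly p x = 0))"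

record ('v,'e) quiver =
  verts :: "'v set"
  arrs :: "'e set"
  src :: "'e \<Rightarrow> 'v"
  tgt :: "'e \<Rightarrow> 'v"

definition finite_quiver :: "('v,'e) quiver \<Rightarrow> bool" where
  "finite_quiver Q \<longleftrightarrow> finite (verts Q) \<and> finite (arrs Q) \<and>
     (\<forall>e\<in>arrs Q. src Q e \<in> verts Q \<and> tgt Q e \<in> verts Q)"

text \<open>Paths from a to b, written as lists of arrows in the order they are traversed
  (concatenation left to right). The empty path is the trivial path at a.\<close>
definition is_path :: "('v,'e) quiver \<Rightarrow> 'v \<Rightarrow> 'v \<Rightarrow> 'e list \<Rightarrow> bool" where
  "is_path Q a b p \<longleftrightarrow> a \<in> verts Q \<and> b \<in> verts Q \<and> set p \<subseteq> arrs Q \<and>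
     (if p = [] then b = a
      else src Q (hd p) = a \<and> tgt Q (last p) = b \<and>
           (\<forall>i. Suc i < length p \<longrightarrow> tgt Q (p ! i) = src Q (p ! Suc i)))"

definition paths :: "('v,'e) quiver \<Rightarrow> 'v \<Rightarrow> 'v \<Rightarrow> 'e list set" where
  "paths Q a b = {p. is_path Q a b p}"

definition acyclic_quiver :: "('v,'e) quiver \<Rightarrow> bool" where
  "acyclic_quiver Q \<longleftrightarrow> (\<forall>a p. is_path Q a a p \<longrightarrow> p = [])"

definition sink :: "('v,'e) quiver \<Rightarrow> 'v \<Rightarrow> bool" where
  "sink Q i \<longleftrightarrow> i \<in> verts Q \<and> \<not> (\<exists>e\<in>arrs Q. src Q e = i)"

definition source :: "('v,'e) quiver \<Rightarrow> 'v \<Rightarrow> bool" where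
  "source Q j \<longleftrightarrow> j \<in> verts Q \<and> \<not> (\<exists>e\<in>arrs Q. tgt Q e = j)"

text \<open>Finite-dimensional right kQ-modules, as representations of Q: a space k^(dim a) at each
  vertex a, and for an arrow e : a \<rightarrow> b the matrix of right multiplication by e,
  a linear map k^(dim a) \<rightarrow> k^(dim b) (acting on column vectors).\<close>
record ('v,'e,'k) rep =
  dimv :: "'v \<Rightarrow> nat"
  mp :: "'e \<Rightarrow> 'k mat"

definition is_rep :: "('v,'e) quiver \<Rightarrow> ('v,'e,'k) rep \<Rightarrow> bool" where
  "is_rep Q M \<longleftrightarrow> (\<forall>e\<in>arrs Q. mp M e \<in> carrier_mat (dimv M (tgt Q e)) (dimv M (src Q e)))"

definition hom :: "('v,'e) quiver \<Rightarrow> ('v,'e,'k::field) rep \<Rightarrow> ('v,'e,'k) rep \<Rightarrow> ('v \<Rightarrow> 'k mat) \<Rightarrow> bool" where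
  "hom Q M N f \<longleftrightarrow> is_rep Q M \<and> is_rep Q N \<and>
     (\<forall>a\<in>verts Q. f a \<in> carrier_mat (dimv N a) (dimv M a)) \<and>
     (\<forall>e\<in>arrs Q. f (tgt Q e) * mp M e = mp N e * f (src Q e))"

definition comp_hom :: "('v \<Rightarrow> 'k::field mat) \<Rightarrow> ('v \<Rightarrow> 'k mat) \<Rightarrow> ('v \<Rightarrow> 'k mat)" where
  "comp_hom g f = (\<lambda>a. g a * f a)"

definition nonzero_hom :: "('v,'e) quiver \<Rightarrow> ('v,'e,'k::field) rep \<Rightarrow> ('v,'e,'k) rep \<Rightarrow> ('v \<Rightarrow> 'k mat) \<Rightarrow> bool" where
  "nonzero_hom Q M N f \<longleftrightarrow> (\<exists>a\<in>verts Q. f a \<noteq> 0\<^sub>m (dimv N a) (dimv M a))"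

definition mono_hom :: "('v,'e) quiver \<Rightarrow> ('v,'e,'k::field) rep \<Rightarrow> ('v,'e,'k) rep \<Rightarrow> ('v \<Rightarrow> 'k mat) \<Rightarrow> bool" where
  "mono_hom Q M N f \<longleftrightarrow> hom Q M N f \<and>
     (\<forall>a\<in>verts Q. \<forall>v\<in>carrier_vec (dimv M a). f a *\<^sub>v v = 0\<^sub>v (dimv N a) \<longrightarrow> v = 0\<^sub>v (dimv M a))"

definition epi_hom :: "('v,'e) quiver \<Rightarrow> ('v,'e,'k::field) rep \<Rightarrow> ('v,'e,'k) rep \<Rightarrow> ('v \<Rightarrow> 'k mat) \<Rightarrow> bool" where
  "epi_hom Q M N f \<longleftrightarrow> hom Q M N f \<and>
     (\<forall>a\<in>verts Q. \<forall>w\<in>carrier_vec (dimv N a). \<exists>v\<in>carrier_vec (dimv M a). f a *\<^sub>v v = w)"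

definition projective :: "('v,'e) quiver \<Rightarrow> ('v,'e,'k::field) rep \<Rightarrow> bool" where
  "projective Q P \<longleftrightarrow> is_rep Q P \<and>
     (\<forall>(M::('v,'e,'k) rep) N g h. epi_hom Q M N g \<longrightarrow> hom Q P N h \<longrightarrow>
        (\<exists>l. hom Q P M l \<and> (\<forall>a\<in>verts Q. g a * l a = h a)))"

definition iso_rep :: "('v,'e) quiver \<Rightarrow> ('v,'e,'k::field) rep \<Rightarrow> ('v,'e,'k) rep \<Rightarrow> bool" where
  "iso_rep Q M N \<longleftrightarrow> (\<exists>f g. hom Q M N f \<and> hom Q N M g \<and>
     (\<forall>a\<in>verts Q. g a * f a = 1\<^sub>m (dimv M a) \<and> f a * g a = 1\<^sub>m (dimv N a)))"

definition zero_rep :: "('v,'e) quiver \<Rightarrow> ('v,'e,'k) rep \<Rightarrow> bool" where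
  "zero_rep Q M \<longleftrightarrow> (\<forall>a\<in>verts Q. dimv M a = 0)"

definition dsum_rep :: "('v,'e) quiver \<Rightarrow> ('v,'e,'k::field) rep \<Rightarrow> ('v,'e,'k) rep \<Rightarrow> ('v,'e,'k) rep" where
  "dsum_rep Q M N = \<lparr> dimv = (\<lambda>a. dimv M a + dimv N a),
     mp = (\<lambda>e. four_block_mat (mp M e) (0\<^sub>m (dimv M (tgt Q e)) (dimv N (src Q e)))
                               (0\<^sub>m (dimv N (tgt Q e)) (dimv M (src Q e))) (mp N e)) \<rparr>"

definition indecomposable :: "('v,'e) quiver \<Rightarrow> ('v,'e,'k::field) rep \<Rightarrow> bool" where
  "indecomposable Q M \<longleftrightarrow> is_rep Q M \<and> \<not> zero_rep Q M \<and>
     (\<forall>M1 M2. is_rep Q M1 \<longrightarrow> is_rep Q M2 \<longrightarrow> iso_rep Q M (dsum_rep Q M1 M2) \<longrightarrow>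
        zero_rep Q M1 \<or> zero_rep Q M2)"

definition rep_finite :: "'k::field itself \<Rightarrow> ('v,'e) quiver \<Rightarrow> bool" where
  "rep_finite _ Q \<longleftrightarrow> (\<exists>S :: ('v,'e,'k) rep set. finite S \<and>
     (\<forall>M. indecomposable Q M \<longrightarrow> (\<exists>N\<in>S. iso_rep Q M N)))"

text \<open>The indecomposable projective right module P_a = e_a kQ: at vertex b it has basis
  the paths from a to b; an arrow e acts by p \<mapsto> p e.\<close>
definition path_enum :: "('v,'e) quiver \<Rightarrow> 'v \<Rightarrow> 'v \<Rightarrow> 'e list list" where
  "path_enum Q a b = (SOME l. distinct l \<and> set l = paths Q a b)"

definition proj_rep :: "('v,'e) quiver \<Rightarrow> 'v \<Rightarrow> ('v,'e,'k::field) rep" where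
  "proj_rep Q a = \<lparr> dimv = (\<lambda>b. length (path_enum Q a b)),
     mp = (\<lambda>e. mat (length (path_enum Q a (tgt Q e))) (length (path_enum Q a (src Q e)))
            (\<lambda>(i,j). if path_enum Q a (tgt Q e) ! i = path_enum Q a (src Q e) ! j @ [e] then 1 else 0)) \<rparr>"

end

(*
  Arrow maps of a projective representation Y are injective and every non-zero vector of Y
  is detected by a morphism Y \<rightarrow> P_s with s a source: Y is a direct summand of a direct sum
  of indecomposable projectives P_b, and each P_b embeds into some P_s along a path s \<leadsto> b.
  Since f commutes with the arrow maps, a vector x with f x \<noteq> 0 can be pushed along arrows
  without f x vanishing; by acyclicity this ends at a sink i. There P_i is one-dimensional,
  so \<alpha> : P_i \<rightarrow> X picking x and \<beta> detecting f x give a non-zero, hence injective, \<beta> f \<alpha>.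
*)

theory Submission
  imports Defs
begin

section \<open>Paths in a finite acyclic quiver\<close>

lemma is_path_Nil_iff: "is_path Q a b [] \<longleftrightarrow> a \<in> verts Q \<and> b = a"
  unfolding is_path_def by auto

lemma arr_ends_in_verts:
  "finite_quiver Q \<Longrightarrow> e \<in> arrs Q \<Longrightarrow> src Q e \<in> verts Q \<and> tgt Q e \<in> verts Q"
  unfolding finite_quiver_def by auto

lemma is_path_snoc:
  assumes fq: "finite_quiver Q" and p: "is_path Q a b p" and e: "e \<in> arrs Q" "src Q e = b"
  shows "is_path Q a (tgt Q e) (p @ [e])"
proof (cases "p = []")
  case True
  then show ?thesis using p e arr_ends_in_verts[OF fq e(1)] unfolding is_path_def by auto
next
  case False
  have "tgt Q ((p @ [e]) ! i) = src Q ((p @ [e]) ! Suc i)" if i: "Suc i < length (p @ [e])" for i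
  proof (cases "Suc i < length p")
    case True
    then show ?thesis using p False by (auto simp: is_path_def nth_append)
  next
    case not_inner: False
    then have "i = length p - 1" using i by auto
    then show ?thesis using p False e not_inner i by (auto simp: is_path_def nth_append last_conv_nth)
  qed
  then show ?thesis using p e arr_ends_in_verts[OF fq e(1)] False unfolding is_path_def by auto
qed

lemma is_path_snocD:
  assumes fq: "finite_quiver Q" and p: "is_path Q a c (q @ [e])"
  shows "is_path Q a (src Q e) q \<and> e \<in> arrs Q \<and> c = tgt Q e"
proof -
  have e: "e \<in> arrs Q" and c: "c = tgt Q e" using p unfolding is_path_def by auto
  have "is_path Q a (src Q e) q"
  proof (cases "q = []")
    case True
    then show ?thesis using p unfolding is_path_def by auto
  next
    case False
    have "tgt Q (last q) = src Q e"
      using p False unfolding is_path_def by (auto simp: nth_append last_conv_nth)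
    moreover have "tgt Q (q ! i) = src Q (q ! Suc i)" if "Suc i < length q" for i
      using p that unfolding is_path_def by (auto simp: nth_append)
    ultimately show ?thesis
      using p False arr_ends_in_verts[OF fq e] unfolding is_path_def by (auto simp: hd_append)
  qed
  then show ?thesis using e c by auto
qed

lemma is_path_append:
  assumes fq: "finite_quiver Q" and p: "is_path Q a b p"
  shows "is_path Q b c q \<Longrightarrow> is_path Q a c (p @ q)"
proof (induction q arbitrary: c rule: rev_induct)
  case Nil
  then show ?case using p by (auto simp: is_path_Nil_iff)
next
  case (snoc e q)
  then have "is_path Q b (src Q e) q" "e \<in> arrs Q" "c = tgt Q e"
    using is_path_snocD[OF fq] by blast+
  then show ?case using snoc.IH is_path_snoc[OF fq] by fastforce
qed

lemma paths_from_sink: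
  assumes "sink Q i"
  shows "paths Q i a = (if a = i then {[]} else {})"
proof -
  have "is_path Q i a p \<longleftrightarrow> p = [] \<and> a = i" for p
    using assms unfolding sink_def is_path_def by (cases p) auto
  then show ?thesis unfolding paths_def by auto
qed

definition arrow_rel :: "('v,'e) quiver \<Rightarrow> 'v rel" where
  "arrow_rel Q = (\<lambda>e. (src Q e, tgt Q e)) ` arrs Q"

lemma trancl_arrow_rel_imp_path:
  assumes fq: "finite_quiver Q" and "(a, b) \<in> (arrow_rel Q)\<^sup>+"
  shows "\<exists>p. p \<noteq> [] \<and> is_path Q a b p"
  using assms(2)
proof (induction rule: trancl_induct)
  case (base b)
  then obtain e where e: "e \<in> arrs Q" "src Q e = a" "tgt Q e = b"
    unfolding arrow_rel_def by auto
  have "is_path Q a a []" using arr_ends_in_verts[OF fq e(1)] e(2) by (simp add: is_path_Nil_iff)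
  from is_path_snoc[OF fq this e(1,2)] e(3) show ?case by auto
next
  case (step b c)
  then obtain e where e: "e \<in> arrs Q" "src Q e = b" "tgt Q e = c"
    unfolding arrow_rel_def by auto
  obtain p where "is_path Q a b p" using step.IH by blast
  from is_path_snoc[OF fq this e(1,2)] e(3) show ?case by auto
qed

lemma wf_arrow_rel:
  assumes fq: "finite_quiver Q" and ac: "acyclic_quiver Q"
  shows "wf (arrow_rel Q)" and "wf ((arrow_rel Q)\<inverse>)"
proof -
  have "finite (arrow_rel Q)" using fq unfolding finite_quiver_def arrow_rel_def by auto
  moreover have "acyclic (arrow_rel Q)"
    unfolding acyclic_def
  proof
    fix a show "(a, a) \<notin> (arrow_rel Q)\<^sup>+"
      using trancl_arrow_rel_imp_path[OF fq, of a a] ac unfolding acyclic_quiver_def by auto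
  qed
  ultimately show "wf (arrow_rel Q)" "wf ((arrow_rel Q)\<inverse>)"
    using finite_acyclic_wf finite_acyclic_wf_converse by auto
qed

lemma exists_path_from_source:
  assumes fq: "finite_quiver Q" and ac: "acyclic_quiver Q"
  shows "b \<in> verts Q \<Longrightarrow> \<exists>s q. source Q s \<and> is_path Q s b q"
proof (induction b rule: wf_induct_rule[OF wf_arrow_rel(1)[OF fq ac]])
  case (1 b)
  show ?case
  proof (cases "source Q b")
    case True
    moreover have "is_path Q b b []" using 1 by (simp add: is_path_Nil_iff)
    ultimately show ?thesis by blast
  next
    case False
    then obtain e where e: "e \<in> arrs Q" "tgt Q e = b" using 1 unfolding source_def by auto
    then have "(src Q e, b) \<in> arrow_rel Q" unfolding arrow_rel_def by auto
    then obtain s q where "source Q s" "is_path Q s (src Q e) q"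
      using 1 arr_ends_in_verts[OF fq e(1)] by blast
    then show ?thesis using is_path_snoc[OF fq _ e(1)] e(2) by blast
  qed
qed

lemma finite_paths:
  assumes fq: "finite_quiver Q" and ac: "acyclic_quiver Q"
  shows "finite (paths Q a b)"
proof (induction b rule: wf_induct_rule[OF wf_arrow_rel(1)[OF fq ac]])
  case (1 b)
  let ?in = "{e \<in> arrs Q. tgt Q e = b}"
  let ?ext = "\<Union>e\<in>?in. (\<lambda>p. p @ [e]) ` paths Q a (src Q e)"
  have "paths Q a b \<subseteq> insert [] ?ext"
  proof
    fix p assume p: "p \<in> paths Q a b"
    show "p \<in> insert [] ?ext"
    proof (cases p rule: rev_cases)
      case (snoc q e)
      then show ?thesis using p is_path_snocD[OF fq, of a b q e] unfolding paths_def by auto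
    qed simp
  qed
  moreover have "finite ?ext"
  proof (intro finite_UN_I finite_imageI)
    show "finite ?in" using fq unfolding finite_quiver_def by auto
    fix e assume "e \<in> ?in"
    then have "(src Q e, b) \<in> arrow_rel Q" unfolding arrow_rel_def by auto
    then show "finite (paths Q a (src Q e))" by (rule 1)
  qed
  ultimately show ?case by (simp add: finite_subset)
qed

section \<open>Matrices indexed by finite bases\<close>

lemma vec_nonzero_index:
  assumes "v \<in> carrier_vec n" "v \<noteq> 0\<^sub>v n"
  shows "\<exists>t<n. v $ t \<noteq> 0"
  using assms by (metis eq_vecI carrier_vecD index_zero_vec(1,2))

lemma mult_mat_vec_zero [simp]: "A \<in> carrier_mat n m \<Longrightarrow> A *\<^sub>v 0\<^sub>v m = 0\<^sub>v n"
  by (intro eq_vecI) auto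

lemma left_inverse_mult_vec_eq_zero:
  fixes A :: "'k::field mat"
  assumes A: "A \<in> carrier_mat n m" and L: "L \<in> carrier_mat m n" and AL: "A * L = 1\<^sub>m n"
    and y: "y \<in> carrier_vec n" and zero: "L *\<^sub>v y = 0\<^sub>v m"
  shows "y = 0\<^sub>v n"
proof -
  have "y = 1\<^sub>m n *\<^sub>v y" using one_mult_mat_vec[OF y] by simp
  also have "\<dots> = (A * L) *\<^sub>v y" using AL by simp
  also have "\<dots> = A *\<^sub>v (L *\<^sub>v y)" using A L y by (simp add: assoc_mult_mat_vec)
  finally show ?thesis using zero A by simp
qed

lemma mat_nonzero_imp_mult_vec_nonzero:
  assumes A: "(A :: 'k::field mat) \<in> carrier_mat n m" and nz: "A \<noteq> 0\<^sub>m n m"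
  obtains x where "x \<in> carrier_vec m" and "A *\<^sub>v x \<noteq> 0\<^sub>v n"
proof -
  obtain r c where rc: "r < n" "c < m" "A $$ (r, c) \<noteq> 0"
    using A nz by (metis carrier_matD eq_matI index_zero_mat(1,2,3))
  then have "(A *\<^sub>v unit_vec m c) $ r \<noteq> 0" using A by simp
  then have "A *\<^sub>v unit_vec m c \<noteq> 0\<^sub>v n" using rc(1) by auto
  then show ?thesis using that unit_vec_carrier by blast
qed

text \<open>Coordinates are ordered by an arbitrary enumeration of the basis, chosen exactly as
  \<open>path_enum\<close> does in \<open>proj_rep\<close>.\<close>

definition enum_list :: "'b set \<Rightarrow> 'b list" where
  "enum_list S = (SOME l. distinct l \<and> set l = S)"

definition enum_index :: "'b set \<Rightarrow> 'b \<Rightarrow> nat" where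
  "enum_index S x = (THE i. i < length (enum_list S) \<and> enum_list S ! i = x)"

lemma enum_list_props:
  assumes "finite S" shows "distinct (enum_list S) \<and> set (enum_list S) = S"
proof -
  obtain l where "distinct l \<and> set l = S" using finite_distinct_list[OF assms] by blast
  then show ?thesis unfolding enum_list_def by (rule someI)
qed

lemma distinct_enum_list: "finite S \<Longrightarrow> distinct (enum_list S)"
  and set_enum_list: "finite S \<Longrightarrow> set (enum_list S) = S"
  using enum_list_props by blast+

lemma length_enum_list: "finite S \<Longrightarrow> length (enum_list S) = card S"
  using distinct_card[OF distinct_enum_list] set_enum_list by fastforce

lemma nth_enum_list_mem: "finite S \<Longrightarrow> t < length (enum_list S) \<Longrightarrow> enum_list S ! t \<in> S"
  using set_enum_list nth_mem by metis

lemma enum_index_correct: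
  assumes "finite S" "x \<in> S"
  shows "enum_index S x < length (enum_list S)" and "enum_list S ! enum_index S x = x"
proof -
  have "\<exists>!i. i < length (enum_list S) \<and> enum_list S ! i = x"
    using distinct_Ex1[OF distinct_enum_list[OF assms(1)], of x] set_enum_list[OF assms(1)] assms(2)
    by simp
  then have "enum_index S x < length (enum_list S) \<and> enum_list S ! enum_index S x = x"
    unfolding enum_index_def by (rule theI')
  then show "enum_index S x < length (enum_list S)" "enum_list S ! enum_index S x = x" by auto
qed

lemma nth_enum_list_eq_iff:
  assumes S: "finite S" and t: "t < length (enum_list S)"
  shows "enum_list S ! t = x \<longleftrightarrow> x \<in> S \<and> t = enum_index S x"
proof
  assume x: "enum_list S ! t = x"
  then have "x \<in> S" using nth_enum_list_mem[OF S t] by simp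
  moreover have "t = enum_index S x"
    using x enum_index_correct[OF S \<open>x \<in> S\<close>] t nth_eq_iff_index_eq[OF distinct_enum_list[OF S]] by metis
  ultimately show "x \<in> S \<and> t = enum_index S x" ..
qed (use enum_index_correct[OF S] in auto)

lemma enum_index_nth: "finite S \<Longrightarrow> t < length (enum_list S) \<Longrightarrow> enum_index S (enum_list S ! t) = t"
  using nth_enum_list_eq_iff by metis

lemma sum_enum_list_delta:
  assumes "finite S"
  shows "(\<Sum>t<length (enum_list S). if enum_list S ! t = z then c t else 0)
    = (if z \<in> S then c (enum_index S z) else 0)"
proof -
  have "(\<Sum>t<length (enum_list S). if enum_list S ! t = z then c t else 0)
      = (\<Sum>t<length (enum_list S). if t = enum_index S z then (if z \<in> S then c t else 0) else 0)"
    by (rule sum.cong) (auto simp: nth_enum_list_eq_iff[OF assms])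
  also have "\<dots> = (if z \<in> S then c (enum_index S z) else 0)"
    using enum_index_correct[OF assms] by (auto simp: sum.delta')
  finally show ?thesis .
qed

definition basis_mat :: "'b set \<Rightarrow> 'c set \<Rightarrow> ('b \<Rightarrow> 'c option) \<Rightarrow> 'k::field mat" where
  "basis_mat S T \<phi> = mat (length (enum_list T)) (length (enum_list S))
     (\<lambda>(r, t). if \<phi> (enum_list S ! t) = Some (enum_list T ! r) then 1 else 0)"

lemma basis_mat_carrier [simp]:
  "basis_mat S T \<phi> \<in> carrier_mat (length (enum_list T)) (length (enum_list S))"
  unfolding basis_mat_def by simp

lemma basis_mat_cong:
  assumes "finite S" and "\<And>x. x \<in> S \<Longrightarrow> \<phi> x = \<psi> x"
  shows "basis_mat S T \<phi> = basis_mat S T \<psi>"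
proof -
  have "\<phi> (enum_list S ! t) = \<psi> (enum_list S ! t)" if "t < length (enum_list S)" for t
    using assms(2)[OF nth_enum_list_mem[OF assms(1) that]] .
  then show ?thesis unfolding basis_mat_def by (intro cong_mat) auto
qed

lemma basis_mat_mult:
  assumes T: "finite T" and \<phi>: "\<And>x y. x \<in> S \<Longrightarrow> \<phi> x = Some y \<Longrightarrow> y \<in> T" and S: "finite S"
  shows "basis_mat T U \<psi> * basis_mat S T \<phi> = (basis_mat S U (\<lambda>x. Option.bind (\<phi> x) \<psi>) :: 'k::field mat)"
proof (rule eq_matI)
  fix r t assume "r < dim_row (basis_mat S U (\<lambda>x. Option.bind (\<phi> x) \<psi>) :: 'k mat)"
    "t < dim_col (basis_mat S U (\<lambda>x. Option.bind (\<phi> x) \<psi>) :: 'k mat)"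
  then have r: "r < length (enum_list U)" and t: "t < length (enum_list S)"
    by (simp_all add: basis_mat_def)
  let ?x = "enum_list S ! t" and ?z = "enum_list U ! r"
  have "(basis_mat T U \<psi> * basis_mat S T \<phi> :: 'k mat) $$ (r, t)
      = (\<Sum>u<length (enum_list T). (if \<psi> (enum_list T ! u) = Some ?z then 1 else 0)
           * (if \<phi> ?x = Some (enum_list T ! u) then 1 else 0))"
    using r t by (simp add: basis_mat_def scalar_prod_def atLeast0LessThan)
  also have "\<dots> = (if Option.bind (\<phi> ?x) \<psi> = Some ?z then 1 else 0)"
  proof (cases "\<phi> ?x")
    case (Some y)
    then have y: "y \<in> T" using \<phi> nth_enum_list_mem[OF S t] by blast
    have "(\<Sum>u<length (enum_list T). (if \<psi> (enum_list T ! u) = Some ?z then 1 else 0)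
           * (if \<phi> ?x = Some (enum_list T ! u) then 1 else 0))
        = (\<Sum>u<length (enum_list T). if enum_list T ! u = y then (if \<psi> y = Some ?z then 1 else 0) else 0 :: 'k)"
      using Some by (intro sum.cong) auto
    also have "\<dots> = (if \<psi> y = Some ?z then 1 else 0)"
      using sum_enum_list_delta[OF T, of y "\<lambda>_. if \<psi> y = Some ?z then 1 else 0 :: 'k"] y by simp
    finally show ?thesis using Some by simp
  qed simp
  finally show "(basis_mat T U \<psi> * basis_mat S T \<phi> :: 'k mat) $$ (r, t)
      = basis_mat S U (\<lambda>x. Option.bind (\<phi> x) \<psi>) $$ (r, t)"
    using r t by (simp add: basis_mat_def)
qed (simp_all add: basis_mat_def)

lemma basis_mat_mult_vec_index:
  assumes S: "finite S" and T: "finite T" and xy: "x \<in> S" "y \<in> T"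
    and fibre: "\<And>x'. x' \<in> S \<Longrightarrow> \<phi> x' = Some y \<longleftrightarrow> x' = x"
    and v: "v \<in> carrier_vec (length (enum_list S))"
  shows "(basis_mat S T \<phi> *\<^sub>v v) $ enum_index T y = v $ enum_index S x"
proof -
  have "(basis_mat S T \<phi> *\<^sub>v v) $ enum_index T y
      = (\<Sum>u<length (enum_list S). (if \<phi> (enum_list S ! u) = Some y then 1 else 0) * v $ u)"
    using v enum_index_correct[OF T xy(2)] by (simp add: basis_mat_def scalar_prod_def atLeast0LessThan)
  also have "\<dots> = (\<Sum>u<length (enum_list S). if enum_list S ! u = x then v $ u else 0)"
  proof (rule sum.cong)
    fix u assume "u \<in> {..<length (enum_list S)}"
    then have "\<phi> (enum_list S ! u) = Some y \<longleftrightarrow> enum_list S ! u = x"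
      using fibre nth_enum_list_mem[OF S] by simp
    then show "(if \<phi> (enum_list S ! u) = Some y then 1 else 0) * v $ u
      = (if enum_list S ! u = x then v $ u else 0)" by simp
  qed simp
  also have "\<dots> = v $ enum_index S x"
    using sum_enum_list_delta[OF S, of x "\<lambda>u. v $ u"] xy(1) by simp
  finally show ?thesis .
qed

lemma mult_basis_mat_index:
  assumes S: "finite S" and T: "finite T" and \<sigma>: "\<And>x. x \<in> S \<Longrightarrow> \<sigma> x \<in> T"
    and A: "A \<in> carrier_mat n (length (enum_list T))" and r: "r < n" and t: "t < length (enum_list S)"
  shows "(A * basis_mat S T (\<lambda>x. Some (\<sigma> x))) $$ (r, t)
    = A $$ (r, enum_index T (\<sigma> (enum_list S ! t)))"
proof -
  have y: "\<sigma> (enum_list S ! t) \<in> T" using \<sigma> nth_enum_list_mem[OF S t] .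
  have "(A * basis_mat S T (\<lambda>x. Some (\<sigma> x))) $$ (r, t)
      = (\<Sum>u<length (enum_list T). if enum_list T ! u = \<sigma> (enum_list S ! t) then A $$ (r, u) else 0)"
    using A r t by (simp add: basis_mat_def scalar_prod_def atLeast0LessThan if_distrib eq_commute cong: if_cong)
  then show ?thesis using sum_enum_list_delta[OF T, of _ "\<lambda>u. A $$ (r, u)"] y by simp
qed

section \<open>Representations with a basis permuted by the arrows\<close>

lemma hom_comp_hom:
  assumes fq: "finite_quiver Q" and f: "hom Q M N f" and g: "hom Q N K g"
  shows "hom Q M K (comp_hom g f)"
  unfolding hom_def comp_hom_def
proof (intro conjI ballI)
  show "is_rep Q M" "is_rep Q K" using f g unfolding hom_def by auto
  fix a assume "a \<in> verts Q"
  then show "g a * f a \<in> carrier_mat (dimv K a) (dimv M a)" using f g unfolding hom_def by auto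
next
  fix e assume e: "e \<in> arrs Q"
  let ?s = "src Q e" and ?t = "tgt Q e"
  have v: "?s \<in> verts Q" "?t \<in> verts Q" using arr_ends_in_verts[OF fq e] by auto
  have c: "f ?s \<in> carrier_mat (dimv N ?s) (dimv M ?s)" "f ?t \<in> carrier_mat (dimv N ?t) (dimv M ?t)"
     "g ?s \<in> carrier_mat (dimv K ?s) (dimv N ?s)" "g ?t \<in> carrier_mat (dimv K ?t) (dimv N ?t)"
     "mp M e \<in> carrier_mat (dimv M ?t) (dimv M ?s)" "mp N e \<in> carrier_mat (dimv N ?t) (dimv N ?s)"
     "mp K e \<in> carrier_mat (dimv K ?t) (dimv K ?s)"
    using f g v e unfolding hom_def is_rep_def by auto
  have "g ?t * f ?t * mp M e = g ?t * (f ?t * mp M e)" using c by simp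
  also have "\<dots> = g ?t * (mp N e * f ?s)" using f e unfolding hom_def by auto
  also have "\<dots> = (g ?t * mp N e) * f ?s" using c by simp
  also have "\<dots> = (mp K e * g ?s) * f ?s" using g e unfolding hom_def by auto
  also have "\<dots> = mp K e * (g ?s * f ?s)" using c by simp
  finally show "g ?t * f ?t * mp M e = mp K e * (g ?s * f ?s)" .
qed

lemma hom_id:
  assumes "is_rep Q Y"
  shows "hom Q Y Y (\<lambda>a. 1\<^sub>m (dimv Y a))"
  using assms unfolding hom_def is_rep_def by auto

definition basis_rep :: "('v,'e) quiver \<Rightarrow> ('v \<Rightarrow> 'b set) \<Rightarrow> ('e \<Rightarrow> 'b \<Rightarrow> 'b) \<Rightarrow> ('v,'e,'k::field) rep" where
  "basis_rep Q B \<sigma> = \<lparr>dimv = (\<lambda>a. length (enum_list (B a))),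
     mp = (\<lambda>e. basis_mat (B (src Q e)) (B (tgt Q e)) (\<lambda>x. Some (\<sigma> e x)))\<rparr>"

lemma dimv_basis_rep [simp]: "dimv (basis_rep Q B \<sigma>) a = length (enum_list (B a))"
  and mp_basis_rep [simp]: "mp (basis_rep Q B \<sigma>) e = basis_mat (B (src Q e)) (B (tgt Q e)) (\<lambda>x. Some (\<sigma> e x))"
  unfolding basis_rep_def by simp_all

lemma is_rep_basis_rep: "is_rep Q (basis_rep Q B \<sigma>)"
  unfolding is_rep_def by simp

lemma proj_rep_eq_basis_rep: "proj_rep Q a = basis_rep Q (paths Q a) (\<lambda>e p. p @ [e])"
  unfolding proj_rep_def basis_rep_def basis_mat_def path_enum_def enum_list_def
  by (auto intro!: cong_mat)

locale basis_action =
  fixes Q :: "('v,'e) quiver" and B :: "'v \<Rightarrow> 'b set" and \<sigma> :: "'e \<Rightarrow> 'b \<Rightarrow> 'b"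
  assumes finite_quiver: "finite_quiver Q"
    and finite_basis: "\<And>a. a \<in> verts Q \<Longrightarrow> finite (B a)"
    and action_maps: "\<And>e x. e \<in> arrs Q \<Longrightarrow> x \<in> B (src Q e) \<Longrightarrow> \<sigma> e x \<in> B (tgt Q e)"
begin

lemma finite_basis_src_tgt: "e \<in> arrs Q \<Longrightarrow> finite (B (src Q e)) \<and> finite (B (tgt Q e))"
  using finite_basis arr_ends_in_verts[OF finite_quiver] by blast

lemma mp_basis_rep_injective:
  assumes e: "e \<in> arrs Q" and inj: "inj_on (\<sigma> e) (B (src Q e))"
    and v: "v \<in> carrier_vec (length (enum_list (B (src Q e))))"
    and zero: "mp (basis_rep Q B \<sigma> :: ('v,'e,'k::field) rep) e *\<^sub>v v = 0\<^sub>v (length (enum_list (B (tgt Q e))))"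
  shows "v = 0\<^sub>v (length (enum_list (B (src Q e))))"
proof (rule eq_vecI)
  let ?S = "B (src Q e)" and ?T = "B (tgt Q e)"
  have S: "finite ?S" and T: "finite ?T" using finite_basis_src_tgt[OF e] by auto
  fix j assume "j < dim_vec (0\<^sub>v (length (enum_list ?S)) :: 'k vec)"
  then have j: "j < length (enum_list ?S)" by simp
  let ?x = "enum_list ?S ! j"
  have x: "?x \<in> ?S" using nth_enum_list_mem[OF S j] .
  have "v $ j = v $ enum_index ?S ?x" using enum_index_nth[OF S j] by simp
  also have "\<dots> = (basis_mat ?S ?T (\<lambda>x. Some (\<sigma> e x)) *\<^sub>v v) $ enum_index ?T (\<sigma> e ?x)"
    using inj_onD[OF inj] action_maps[OF e x] x
    by (intro basis_mat_mult_vec_index[OF S T x _ _ v, symmetric]) auto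
  also have "\<dots> = 0" using zero enum_index_correct[OF T action_maps[OF e x]] by simp
  finally show "v $ j = 0\<^sub>v (length (enum_list ?S)) $ j" using j by simp
qed (use v in simp)

end

lemma basis_action_paths:
  assumes fq: "finite_quiver Q" and ac: "acyclic_quiver Q"
  shows "basis_action Q (paths Q s) (\<lambda>e p. p @ [e])"
proof
  fix e p assume "e \<in> arrs Q" "p \<in> paths Q s (src Q e)"
  then show "p @ [e] \<in> paths Q s (tgt Q e)" using is_path_snoc[OF fq] unfolding paths_def by auto
qed (use fq finite_paths[OF fq ac] in auto)

definition basis_hom :: "('v \<Rightarrow> 'b set) \<Rightarrow> ('v \<Rightarrow> 'c set) \<Rightarrow> ('b \<Rightarrow> 'c option) \<Rightarrow> 'v \<Rightarrow> 'k::field mat" where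
  "basis_hom B B' \<phi> a = basis_mat (B a) (B' a) \<phi>"

lemma hom_basis_hom:
  assumes A: "basis_action Q B \<sigma>" and A': "basis_action Q B' \<sigma>'"
    and \<phi>_maps: "\<And>a x z. a \<in> verts Q \<Longrightarrow> x \<in> B a \<Longrightarrow> \<phi> x = Some z \<Longrightarrow> z \<in> B' a"
    and \<phi>_comm: "\<And>e x. e \<in> arrs Q \<Longrightarrow> x \<in> B (src Q e) \<Longrightarrow> \<phi> (\<sigma> e x) = map_option (\<sigma>' e) (\<phi> x)"
  shows "hom Q (basis_rep Q B \<sigma>) (basis_rep Q B' \<sigma>') (basis_hom B B' \<phi> :: 'v \<Rightarrow> 'k::field mat)"
  unfolding hom_def
proof (intro conjI ballI)
  fix e assume e: "e \<in> arrs Q"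
  interpret A: basis_action Q B \<sigma> by (rule A)
  interpret A': basis_action Q B' \<sigma>' by (rule A')
  have S: "finite (B (src Q e))" and T: "finite (B (tgt Q e))" and S': "finite (B' (src Q e))"
    using A.finite_basis_src_tgt[OF e] A'.finite_basis_src_tgt[OF e] by auto
  have s: "src Q e \<in> verts Q" using arr_ends_in_verts[OF A.finite_quiver e] by blast
  have "\<And>x y. x \<in> B (src Q e) \<Longrightarrow> Some (\<sigma> e x) = Some y \<Longrightarrow> y \<in> B (tgt Q e)"
    using A.action_maps[OF e] by auto
  from basis_mat_mult[where \<phi>="\<lambda>x. Some (\<sigma> e x)" and \<psi>=\<phi>, OF T this S]
  have "(basis_hom B B' \<phi> (tgt Q e) :: 'k mat) * mp (basis_rep Q B \<sigma>) e
      = basis_mat (B (src Q e)) (B' (tgt Q e)) (\<lambda>x. \<phi> (\<sigma> e x))"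
    by (simp add: basis_hom_def)
  also have "\<dots> = basis_mat (B (src Q e)) (B' (tgt Q e)) (\<lambda>x. Option.bind (\<phi> x) (\<lambda>y. Some (\<sigma>' e y)))"
    using \<phi>_comm[OF e] by (intro basis_mat_cong[OF S]) (simp add: map_option_case split: option.split)
  also have "\<dots> = mp (basis_rep Q B' \<sigma>') e * basis_hom B B' \<phi> (src Q e)"
    unfolding basis_hom_def mp_basis_rep
    by (rule basis_mat_mult[OF S' _ S, symmetric]) (use \<phi>_maps[OF s] in blast)
  finally show "(basis_hom B B' \<phi> (tgt Q e) :: 'k mat) * mp (basis_rep Q B \<sigma>) e
      = mp (basis_rep Q B' \<sigma>') e * basis_hom B B' \<phi> (src Q e)" .
qed (simp_all add: is_rep_basis_rep basis_hom_def)

section \<open>Projective representations\<close>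

definition path_map :: "('v,'e,'k::field) rep \<Rightarrow> 'v \<Rightarrow> 'e list \<Rightarrow> 'k mat" where
  "path_map Y b p = foldl (\<lambda>A e. mp Y e * A) (1\<^sub>m (dimv Y b)) p"

lemma path_map_Nil [simp]: "path_map Y b [] = 1\<^sub>m (dimv Y b)"
  and path_map_snoc [simp]: "path_map Y b (p @ [e]) = mp Y e * path_map Y b p"
  unfolding path_map_def by simp_all

lemma path_map_carrier:
  assumes fq: "finite_quiver Q" and Y: "is_rep Q Y"
  shows "is_path Q b a p \<Longrightarrow> path_map Y b p \<in> carrier_mat (dimv Y a) (dimv Y b)"
proof (induction p arbitrary: a rule: rev_induct)
  case Nil
  then show ?case by (simp add: is_path_Nil_iff)
next
  case (snoc e p)
  then have "is_path Q b (src Q e) p" "e \<in> arrs Q" "a = tgt Q e"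
    using is_path_snocD[OF fq] by blast+
  then show ?case using snoc.IH Y unfolding is_rep_def by auto
qed

text \<open>\<open>cover\<close> is the direct sum of \<open>dimv Y b\<close> copies of \<open>P_b\<close> over all vertices \<open>b\<close>:
  its basis element \<open>(b, k, p)\<close> is the path \<open>p\<close> from \<open>b\<close> in the \<open>k\<close>-th copy, which
  \<open>cover_map\<close> sends to the \<open>k\<close>-th basis vector of \<open>Y\<close> at \<open>b\<close> transported along \<open>p\<close>.\<close>

locale free_cover =
  fixes Q :: "('v,'e) quiver" and Y :: "('v,'e,'k::field) rep"
  assumes finite_quiver: "finite_quiver Q" and acyclic: "acyclic_quiver Q" and is_rep: "is_rep Q Y"
begin

definition cover_basis :: "'v \<Rightarrow> ('v \<times> nat \<times> 'e list) set" where
  "cover_basis a = {(b, k, p). b \<in> verts Q \<and> k < dimv Y b \<and> p \<in> paths Q b a}"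

definition cover_action :: "'e \<Rightarrow> 'v \<times> nat \<times> 'e list \<Rightarrow> 'v \<times> nat \<times> 'e list" where
  "cover_action e = (\<lambda>(b, k, p). (b, k, p @ [e]))"

definition cover :: "('v,'e,'k) rep" where
  "cover = basis_rep Q cover_basis cover_action"

definition cover_col :: "'v \<times> nat \<times> 'e list \<Rightarrow> 'k vec" where
  "cover_col = (\<lambda>(b, k, p). path_map Y b p *\<^sub>v unit_vec (dimv Y b) k)"

definition cover_map :: "'v \<Rightarrow> 'k mat" where
  "cover_map a = mat (dimv Y a) (length (enum_list (cover_basis a)))
     (\<lambda>(r, t). cover_col (enum_list (cover_basis a) ! t) $ r)"

lemma finite_cover_basis: "finite (cover_basis a)"
proof -
  have "cover_basis a \<subseteq> (\<Union>b\<in>verts Q. {b} \<times> {..<dimv Y b} \<times> paths Q b a)"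
    unfolding cover_basis_def by auto
  moreover have "finite (\<Union>b\<in>verts Q. {b} \<times> {..<dimv Y b} \<times> paths Q b a)"
    using finite_quiver finite_paths[OF finite_quiver acyclic]
    by (intro finite_UN_I finite_SigmaI) (auto simp: finite_quiver_def)
  ultimately show ?thesis by (rule finite_subset)
qed

lemma basis_action_cover: "basis_action Q cover_basis cover_action"
proof
  fix e x assume "e \<in> arrs Q" "x \<in> cover_basis (src Q e)"
  then show "cover_action e x \<in> cover_basis (tgt Q e)"
    using is_path_snoc[OF finite_quiver] unfolding cover_basis_def cover_action_def paths_def by auto
qed (use finite_quiver finite_cover_basis in auto)

lemma cover_action_inj: "inj_on (cover_action e) (cover_basis a)"
  unfolding inj_on_def cover_action_def by auto

lemma cover_col_carrier:
  assumes "x \<in> cover_basis a" shows "cover_col x \<in> carrier_vec (dimv Y a)"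
proof -
  obtain b k p where x: "x = (b, k, p)" and p: "is_path Q b a p"
    using assms unfolding cover_basis_def paths_def by auto
  show ?thesis using path_map_carrier[OF finite_quiver is_rep p] unfolding x cover_col_def by simp
qed

lemma col_cover_map:
  assumes t: "t < length (enum_list (cover_basis a))"
  shows "col (cover_map a) t = cover_col (enum_list (cover_basis a) ! t)"
proof -
  have "cover_col (enum_list (cover_basis a) ! t) \<in> carrier_vec (dimv Y a)"
    using cover_col_carrier[OF nth_enum_list_mem[OF finite_cover_basis t]] .
  then show ?thesis using t unfolding cover_map_def by (intro eq_vecI) auto
qed

lemma cover_map_carrier: "cover_map a \<in> carrier_mat (dimv Y a) (dimv cover a)"
  unfolding cover_map_def cover_def by simp

lemma cover_col_action:
  assumes "e \<in> arrs Q" and "x \<in> cover_basis (src Q e)"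
  shows "cover_col (cover_action e x) = mp Y e *\<^sub>v cover_col x"
proof -
  obtain b k p where x: "x = (b, k, p)" and p: "is_path Q b (src Q e) p"
    using assms(2) unfolding cover_basis_def paths_def by auto
  have "mp Y e \<in> carrier_mat (dimv Y (tgt Q e)) (dimv Y (src Q e))"
    using is_rep assms(1) unfolding is_rep_def by auto
  then show ?thesis
    using path_map_carrier[OF finite_quiver is_rep p] unfolding x cover_col_def cover_action_def
    by (simp add: assoc_mult_mat_vec)
qed

lemma hom_cover_map: "hom Q cover Y cover_map"
  unfolding hom_def
proof (intro conjI ballI)
  show "is_rep Q cover" unfolding cover_def by (rule is_rep_basis_rep)
  fix e assume e: "e \<in> arrs Q"
  let ?S = "cover_basis (src Q e)" and ?T = "cover_basis (tgt Q e)"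
  have mY: "mp Y e \<in> carrier_mat (dimv Y (tgt Q e)) (dimv Y (src Q e))"
    using is_rep e unfolding is_rep_def by auto
  show "cover_map (tgt Q e) * mp cover e = mp Y e * cover_map (src Q e)"
  proof (rule eq_matI)
    fix r t assume "r < dim_row (mp Y e * cover_map (src Q e))" "t < dim_col (mp Y e * cover_map (src Q e))"
    then have r: "r < dimv Y (tgt Q e)" and t: "t < length (enum_list ?S)"
      using mY by (auto simp: cover_map_def)
    let ?x = "enum_list ?S ! t"
    have x: "?x \<in> ?S" using nth_enum_list_mem[OF finite_cover_basis t] .
    have y: "cover_action e ?x \<in> ?T" using basis_action.action_maps[OF basis_action_cover e x] .
    have "(cover_map (tgt Q e) * mp cover e) $$ (r, t) = cover_map (tgt Q e) $$ (r, enum_index ?T (cover_action e ?x))"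
      unfolding cover_def mp_basis_rep
      using basis_action.action_maps[OF basis_action_cover e] cover_map_carrier r t
      by (intro mult_basis_mat_index[OF finite_cover_basis finite_cover_basis]) (auto simp: cover_def)
    also have "\<dots> = cover_col (cover_action e ?x) $ r"
      unfolding cover_map_def using r enum_index_correct[OF finite_cover_basis y] by simp
    also have "\<dots> = (mp Y e *\<^sub>v col (cover_map (src Q e)) t) $ r"
      by (simp add: cover_col_action[OF e x] col_cover_map[OF t])
    also have "\<dots> = (mp Y e * cover_map (src Q e)) $$ (r, t)"
      using mY r t by (simp add: cover_map_def)
    finally show "(cover_map (tgt Q e) * mp cover e) $$ (r, t) = (mp Y e * cover_map (src Q e)) $$ (r, t)" .
  qed (use mY in \<open>auto simp: cover_map_def cover_def basis_mat_def\<close>)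
qed (use is_rep cover_map_carrier in auto)

lemma epi_cover_map: "epi_hom Q cover Y cover_map"
  unfolding epi_hom_def
proof (intro conjI ballI)
  fix a and w :: "'k vec" assume a: "a \<in> verts Q" and w: "w \<in> carrier_vec (dimv Y a)"
  let ?B = "cover_basis a"
  define v :: "'k vec" where "v = vec (length (enum_list ?B))
    (\<lambda>t. case enum_list ?B ! t of (b, k, p) \<Rightarrow> if b = a \<and> p = [] then w $ k else 0)"
  have "cover_map a *\<^sub>v v = w"
  proof (rule eq_vecI)
    fix r assume "r < dim_vec w"
    then have r: "r < dimv Y a" using w by simp
    have summand: "cover_map a $$ (r, t) * v $ t = (if enum_list ?B ! t = (a, r, []) then w $ r else 0)"
      if t: "t < length (enum_list ?B)" for t
    proof -
      obtain b k p where x: "enum_list ?B ! t = (b, k, p)" by (cases "enum_list ?B ! t")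
      have "k < dimv Y b" using nth_enum_list_mem[OF finite_cover_basis t] x unfolding cover_basis_def by auto
      then show ?thesis using r t x by (auto simp: cover_map_def v_def cover_col_def)
    qed
    have "(cover_map a *\<^sub>v v) $ r = (\<Sum>t<length (enum_list ?B). cover_map a $$ (r, t) * v $ t)"
      using r by (simp add: cover_map_def v_def scalar_prod_def atLeast0LessThan)
    also have "\<dots> = (\<Sum>t<length (enum_list ?B). if enum_list ?B ! t = (a, r, []) then w $ r else 0)"
      using summand by (intro sum.cong) auto
    also have "\<dots> = w $ r"
      using sum_enum_list_delta[OF finite_cover_basis, where z="(a, r, [])" and c="\<lambda>_. w $ r"] a r
      by (simp add: cover_basis_def paths_def is_path_Nil_iff)
    finally show "(cover_map a *\<^sub>v v) $ r = w $ r" .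
  qed (use w in \<open>simp add: cover_map_def\<close>)
  moreover have "v \<in> carrier_vec (dimv cover a)" unfolding v_def cover_def by simp
  ultimately show "\<exists>v\<in>carrier_vec (dimv cover a). cover_map a *\<^sub>v v = w" by blast
qed (rule hom_cover_map)

lemma projective_section:
  assumes "projective Q Y"
  obtains l where "hom Q Y cover l" and "\<And>a. a \<in> verts Q \<Longrightarrow> cover_map a * l a = 1\<^sub>m (dimv Y a)"
  using assms epi_cover_map hom_id[OF is_rep] unfolding projective_def by blast

lemma projective_arrow_injective:
  assumes pY: "projective Q Y" and e: "e \<in> arrs Q"
    and y: "y \<in> carrier_vec (dimv Y (src Q e))" and zero: "mp Y e *\<^sub>v y = 0\<^sub>v (dimv Y (tgt Q e))"
  shows "y = 0\<^sub>v (dimv Y (src Q e))"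
proof -
  let ?s = "src Q e" and ?t = "tgt Q e"
  obtain l where l: "hom Q Y cover l" and gl: "\<And>a. a \<in> verts Q \<Longrightarrow> cover_map a * l a = 1\<^sub>m (dimv Y a)"
    using projective_section[OF pY] by blast
  have v: "?s \<in> verts Q" "?t \<in> verts Q" using arr_ends_in_verts[OF finite_quiver e] by auto
  have lc: "l ?s \<in> carrier_mat (dimv cover ?s) (dimv Y ?s)" "l ?t \<in> carrier_mat (dimv cover ?t) (dimv Y ?t)"
    using l v unfolding hom_def by auto
  have mY: "mp Y e \<in> carrier_mat (dimv Y ?t) (dimv Y ?s)" using is_rep e unfolding is_rep_def by auto
  have mC: "mp cover e \<in> carrier_mat (dimv cover ?t) (dimv cover ?s)" unfolding cover_def by simp
  have "mp cover e *\<^sub>v (l ?s *\<^sub>v y) = (mp cover e * l ?s) *\<^sub>v y" using mC lc y by simp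
  also have "\<dots> = (l ?t * mp Y e) *\<^sub>v y" using l e unfolding hom_def by auto
  also have "\<dots> = 0\<^sub>v (dimv cover ?t)" using lc mY y zero by (simp add: assoc_mult_mat_vec)
  moreover have "l ?s *\<^sub>v y \<in> carrier_vec (length (enum_list (cover_basis ?s)))"
    using lc y by (simp add: cover_def)
  ultimately have "l ?s *\<^sub>v y = 0\<^sub>v (dimv cover ?s)"
    using basis_action.mp_basis_rep_injective[OF basis_action_cover e cover_action_inj]
    unfolding cover_def by simp
  then show ?thesis using left_inverse_mult_vec_eq_zero[OF cover_map_carrier lc(1) gl[OF v(1)] y] by simp
qed

definition cover_to_proj :: "'v \<Rightarrow> 'v \<Rightarrow> nat \<Rightarrow> 'e list \<Rightarrow> 'v \<Rightarrow> 'k mat" where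
  "cover_to_proj s b k q = basis_hom cover_basis (paths Q s)
     (\<lambda>(b', k', p). if b' = b \<and> k' = k then Some (q @ p) else None)"

lemma hom_cover_to_proj:
  assumes q: "is_path Q s b q"
  shows "hom Q cover (proj_rep Q s) (cover_to_proj s b k q)"
  unfolding cover_def proj_rep_eq_basis_rep cover_to_proj_def
proof (rule hom_basis_hom[OF basis_action_cover basis_action_paths[OF finite_quiver acyclic]])
  fix a x z assume "a \<in> verts Q" "x \<in> cover_basis a"
    "(case x of (b', k', p) \<Rightarrow> if b' = b \<and> k' = k then Some (q @ p) else None) = Some z"
  then show "z \<in> paths Q s a"
    using is_path_append[OF finite_quiver q] unfolding cover_basis_def paths_def by (auto split: if_splits)
qed (auto simp: cover_action_def)

lemma cover_to_proj_mult_vec_nonzero: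
  assumes q: "is_path Q s b q" and x: "(b, k, p) \<in> cover_basis i"
    and m: "m \<in> carrier_vec (dimv cover i)" and mx: "m $ enum_index (cover_basis i) (b, k, p) \<noteq> 0"
  shows "cover_to_proj s b k q i *\<^sub>v m \<noteq> 0\<^sub>v (dimv (proj_rep Q s :: ('v,'e,'k) rep) i)"
proof
  assume zero: "cover_to_proj s b k q i *\<^sub>v m = 0\<^sub>v (dimv (proj_rep Q s :: ('v,'e,'k) rep) i)"
  have qp: "q @ p \<in> paths Q s i"
    using x is_path_append[OF finite_quiver q] unfolding cover_basis_def paths_def by auto
  have "(cover_to_proj s b k q i *\<^sub>v m) $ enum_index (paths Q s i) (q @ p)
      = m $ enum_index (cover_basis i) (b, k, p)"
    unfolding cover_to_proj_def basis_hom_def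
    using qp m finite_paths[OF finite_quiver acyclic]
    by (intro basis_mat_mult_vec_index[OF finite_cover_basis _ x]) (auto simp: cover_def split: if_splits)
  moreover have "enum_index (paths Q s i) (q @ p) < dimv (proj_rep Q s :: ('v,'e,'k) rep) i"
    using enum_index_correct(1)[OF finite_paths[OF finite_quiver acyclic] qp]
    by (simp add: proj_rep_eq_basis_rep)
  ultimately show False using zero mx by (metis index_zero_vec(1))
qed

lemma projective_separated_by_source:
  assumes pY: "projective Q Y" and i: "i \<in> verts Q"
    and y: "y \<in> carrier_vec (dimv Y i)" and nz: "y \<noteq> 0\<^sub>v (dimv Y i)"
  obtains s \<beta> where "source Q s" and "hom Q Y (proj_rep Q s) \<beta>"
    and "\<beta> i *\<^sub>v y \<noteq> 0\<^sub>v (dimv (proj_rep Q s :: ('v,'e,'k) rep) i)"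
proof -
  obtain l where l: "hom Q Y cover l" and gl: "\<And>a. a \<in> verts Q \<Longrightarrow> cover_map a * l a = 1\<^sub>m (dimv Y a)"
    using projective_section[OF pY] by blast
  have lc: "l i \<in> carrier_mat (dimv cover i) (dimv Y i)" using l i unfolding hom_def by auto
  define m where "m = l i *\<^sub>v y"
  have mc: "m \<in> carrier_vec (dimv cover i)" unfolding m_def using lc y by simp
  have "m \<noteq> 0\<^sub>v (dimv cover i)"
    using left_inverse_mult_vec_eq_zero[OF cover_map_carrier lc gl[OF i] y] nz unfolding m_def by blast
  then obtain t where t: "t < length (enum_list (cover_basis i))" and mt: "m $ t \<noteq> 0"
    using vec_nonzero_index[OF mc] by (auto simp: cover_def)
  obtain b k p where x: "enum_list (cover_basis i) ! t = (b, k, p)" by (cases "enum_list (cover_basis i) ! t")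
  have bkp: "(b, k, p) \<in> cover_basis i" using nth_enum_list_mem[OF finite_cover_basis t] x by simp
  then obtain s q where s: "source Q s" and q: "is_path Q s b q"
    using exists_path_from_source[OF finite_quiver acyclic] unfolding cover_basis_def by blast
  define \<beta> where "\<beta> = comp_hom (cover_to_proj s b k q) l"
  have "hom Q Y (proj_rep Q s) \<beta>"
    unfolding \<beta>_def using hom_comp_hom[OF finite_quiver l hom_cover_to_proj[OF q]] .
  moreover have "\<beta> i *\<^sub>v y = cover_to_proj s b k q i *\<^sub>v m"
    unfolding \<beta>_def comp_hom_def m_def cover_to_proj_def basis_hom_def
    using lc y by (intro assoc_mult_mat_vec[OF basis_mat_carrier]) (simp_all add: cover_def)
  moreover have "m $ enum_index (cover_basis i) (b, k, p) \<noteq> 0"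
    using mt enum_index_nth[OF finite_cover_basis t] x by simp
  ultimately show ?thesis using that s cover_to_proj_mult_vec_nonzero[OF q bkp mc] by metis
qed

end

section \<open>Pushing a vector along arrows to a sink\<close>

lemma hom_mult_vec_arrow:
  assumes f: "hom Q X Y f" and fq: "finite_quiver Q" and e: "e \<in> arrs Q"
    and x: "x \<in> carrier_vec (dimv X (src Q e))"
  shows "f (tgt Q e) *\<^sub>v (mp X e *\<^sub>v x) = mp Y e *\<^sub>v (f (src Q e) *\<^sub>v x)"
proof -
  have v: "src Q e \<in> verts Q" "tgt Q e \<in> verts Q" using arr_ends_in_verts[OF fq e] by auto
  have c: "mp X e \<in> carrier_mat (dimv X (tgt Q e)) (dimv X (src Q e))"
    "mp Y e \<in> carrier_mat (dimv Y (tgt Q e)) (dimv Y (src Q e))"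
    "f (src Q e) \<in> carrier_mat (dimv Y (src Q e)) (dimv X (src Q e))"
    "f (tgt Q e) \<in> carrier_mat (dimv Y (tgt Q e)) (dimv X (tgt Q e))"
    using f e v unfolding hom_def is_rep_def by auto
  have "f (tgt Q e) *\<^sub>v (mp X e *\<^sub>v x) = (f (tgt Q e) * mp X e) *\<^sub>v x"
    using c x by (simp add: assoc_mult_mat_vec)
  also have "\<dots> = (mp Y e * f (src Q e)) *\<^sub>v x" using f e unfolding hom_def by auto
  also have "\<dots> = mp Y e *\<^sub>v (f (src Q e) *\<^sub>v x)" using c x by (simp add: assoc_mult_mat_vec)
  finally show ?thesis .
qed

lemma nonzero_propagates_to_sink:
  assumes fq: "finite_quiver Q" and ac: "acyclic_quiver Q" and pY: "projective Q Y"
    and f: "hom Q X Y f"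
  shows "a \<in> verts Q \<Longrightarrow> x \<in> carrier_vec (dimv X a) \<Longrightarrow> f a *\<^sub>v x \<noteq> 0\<^sub>v (dimv Y a) \<Longrightarrow>
     \<exists>i x'. sink Q i \<and> x' \<in> carrier_vec (dimv X i) \<and> f i *\<^sub>v x' \<noteq> 0\<^sub>v (dimv Y i)"
proof (induction a arbitrary: x rule: wf_induct_rule[OF wf_arrow_rel(2)[OF fq ac]])
  case (1 a)
  show ?case
  proof (cases "sink Q a")
    case True
    then show ?thesis using 1 by blast
  next
    case False
    then obtain e where e: "e \<in> arrs Q" "src Q e = a" using 1 unfolding sink_def by auto
    interpret free_cover Q Y
      using fq ac pY unfolding free_cover_def projective_def by blast
    have c: "mp X e \<in> carrier_mat (dimv X (tgt Q e)) (dimv X a)"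
      "f a \<in> carrier_mat (dimv Y a) (dimv X a)"
      using f e 1(2) unfolding hom_def is_rep_def by auto
    have "mp Y e *\<^sub>v (f a *\<^sub>v x) \<noteq> 0\<^sub>v (dimv Y (tgt Q e))"
      using projective_arrow_injective[OF pY e(1), of "f a *\<^sub>v x"] c(2) 1(3,4) e(2) by auto
    then have "f (tgt Q e) *\<^sub>v (mp X e *\<^sub>v x) \<noteq> 0\<^sub>v (dimv Y (tgt Q e))"
      using hom_mult_vec_arrow[OF f fq e(1)] 1(3) e(2) by simp
    moreover have "(tgt Q e, a) \<in> (arrow_rel Q)\<inverse>" using e unfolding arrow_rel_def by auto
    moreover have "tgt Q e \<in> verts Q" using arr_ends_in_verts[OF fq e(1)] by blast
    moreover have "mp X e *\<^sub>v x \<in> carrier_vec (dimv X (tgt Q e))" using c(1) 1(3) by simp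
    ultimately show ?thesis using 1(1) by blast
  qed
qed

lemma nonzero_hom_nonzero_at_sink:
  assumes fq: "finite_quiver Q" and ac: "acyclic_quiver Q" and pY: "projective Q Y"
    and f: "hom Q X Y f" and nz: "nonzero_hom Q X Y f"
  obtains i x where "sink Q i" and "x \<in> carrier_vec (dimv X i)" and "f i *\<^sub>v x \<noteq> 0\<^sub>v (dimv Y i)"
proof -
  obtain a where a: "a \<in> verts Q" and "f a \<noteq> 0\<^sub>m (dimv Y a) (dimv X a)"
    using nz unfolding nonzero_hom_def by blast
  moreover have "f a \<in> carrier_mat (dimv Y a) (dimv X a)" using f a unfolding hom_def by auto
  ultimately obtain x where "x \<in> carrier_vec (dimv X a)" "f a *\<^sub>v x \<noteq> 0\<^sub>v (dimv Y a)"
    using mat_nonzero_imp_mult_vec_nonzero by blast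
  then show ?thesis using nonzero_propagates_to_sink[OF fq ac pY f a] that by blast
qed

section \<open>The simple projective at a sink\<close>

lemma dimv_proj_rep_sink:
  assumes "sink Q i"
  shows "dimv (proj_rep Q i :: ('v,'e,'k::field) rep) a = (if a = i then 1 else 0)"
  using paths_from_sink[OF assms] length_enum_list[of "paths Q i a"]
  by (simp add: proj_rep_eq_basis_rep)

definition point_hom :: "('v,'e,'k::field) rep \<Rightarrow> 'v \<Rightarrow> 'k vec \<Rightarrow> 'v \<Rightarrow> 'k mat" where
  "point_hom X i x a = mat (dimv X a) (if a = i then 1 else 0) (\<lambda>(r, _). x $ r)"

lemma hom_point_hom:
  fixes X :: "('v,'e,'k::field) rep"
  assumes i: "sink Q i" and X: "is_rep Q X"
  shows "hom Q (proj_rep Q i) X (point_hom X i x)"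
  unfolding hom_def
proof (intro conjI ballI)
  show "is_rep Q (proj_rep Q i)" unfolding proj_rep_eq_basis_rep by (rule is_rep_basis_rep)
  fix e assume e: "e \<in> arrs Q"
  have "src Q e \<noteq> i" using i e unfolding sink_def by auto
  then have "dimv (proj_rep Q i :: ('v,'e,'k) rep) (src Q e) = 0" by (simp add: dimv_proj_rep_sink[OF i])
  moreover have "mp (proj_rep Q i :: ('v,'e,'k) rep) e
      \<in> carrier_mat (dimv (proj_rep Q i :: ('v,'e,'k) rep) (tgt Q e)) (dimv (proj_rep Q i :: ('v,'e,'k) rep) (src Q e))"
    "mp X e \<in> carrier_mat (dimv X (tgt Q e)) (dimv X (src Q e))"
    using X e unfolding is_rep_def proj_rep_eq_basis_rep by auto
  ultimately show "point_hom X i x (tgt Q e) * mp (proj_rep Q i) e = mp X e * point_hom X i x (src Q e)"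
    using \<open>src Q e \<noteq> i\<close> by (intro eq_matI) (auto simp: point_hom_def)
qed (use X in \<open>auto simp: point_hom_def dimv_proj_rep_sink[OF i]\<close>)

lemma point_hom_unit_vec:
  "x \<in> carrier_vec (dimv X i) \<Longrightarrow> point_hom X i x i *\<^sub>v unit_vec 1 0 = x"
  unfolding point_hom_def by (intro eq_vecI) (auto simp: scalar_prod_def)

lemma comp_hom_point_hom_unit_vec:
  assumes f: "hom Q X Y f" and \<beta>: "hom Q Y Z \<beta>" and i: "i \<in> verts Q"
    and x: "x \<in> carrier_vec (dimv X i)"
  shows "comp_hom \<beta> (comp_hom f (point_hom X i x)) i *\<^sub>v unit_vec 1 0 = \<beta> i *\<^sub>v (f i *\<^sub>v x)"
proof -
  have fi: "f i \<in> carrier_mat (dimv Y i) (dimv X i)" using f i unfolding hom_def by auto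
  have \<beta>i: "\<beta> i \<in> carrier_mat (dimv Z i) (dimv Y i)" using \<beta> i unfolding hom_def by auto
  have \<alpha>i: "point_hom X i x i \<in> carrier_mat (dimv X i) 1" by (simp add: point_hom_def)
  show ?thesis
    unfolding comp_hom_def
    using assoc_mult_mat_vec[OF \<beta>i mult_carrier_mat[OF fi \<alpha>i] unit_vec_carrier]
      assoc_mult_mat_vec[OF fi \<alpha>i unit_vec_carrier] point_hom_unit_vec[OF x] by simp
qed

lemma mono_nonzero_hom_from_sink_proj:
  fixes N :: "('v,'e,'k::field) rep"
  assumes i: "sink Q i" and C: "hom Q (proj_rep Q i) N C"
    and nz: "C i *\<^sub>v unit_vec 1 0 \<noteq> 0\<^sub>v (dimv N i)"
  shows "mono_hom Q (proj_rep Q i) N C \<and> nonzero_hom Q (proj_rep Q i) N C"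
proof -
  let ?P = "proj_rep Q i :: ('v,'e,'k) rep"
  have iv: "i \<in> verts Q" using i unfolding sink_def by simp
  have Ci: "C i \<in> carrier_mat (dimv N i) 1" using C iv unfolding hom_def by (auto simp: dimv_proj_rep_sink[OF i])
  have "v = 0\<^sub>v (dimv ?P a)"
    if a: "a \<in> verts Q" and v: "v \<in> carrier_vec (dimv ?P a)" and zero: "C a *\<^sub>v v = 0\<^sub>v (dimv N a)" for a v
  proof (cases "a = i")
    case True
    let ?w = "C i *\<^sub>v unit_vec 1 0"
    have v1: "v \<in> carrier_vec 1" using v True by (simp add: dimv_proj_rep_sink[OF i])
    then have "v = v $ 0 \<cdot>\<^sub>v unit_vec 1 0" by (intro eq_vecI) auto
    then have "C i *\<^sub>v v = C i *\<^sub>v (v $ 0 \<cdot>\<^sub>v unit_vec 1 0)" by (rule arg_cong)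
    also have "\<dots> = v $ 0 \<cdot>\<^sub>v ?w" by (rule mult_mat_vec[OF Ci unit_vec_carrier])
    finally have w0: "v $ 0 \<cdot>\<^sub>v ?w = 0\<^sub>v (dimv N i)" using zero True by simp
    obtain t where t: "t < dimv N i" "?w $ t \<noteq> 0"
      using vec_nonzero_index[OF mult_mat_vec_carrier[OF Ci unit_vec_carrier] nz] by blast
    have "v $ 0 * ?w $ t = 0" using arg_cong[OF w0, of "\<lambda>u. u $ t"] t(1) Ci by simp
    then have "v $ 0 = 0" using t(2) by simp
    then show ?thesis using v1 True by (intro eq_vecI) (auto simp: dimv_proj_rep_sink[OF i])
  qed (use v in \<open>auto simp: dimv_proj_rep_sink[OF i]\<close>)
  then have "mono_hom Q ?P N C" using C unfolding mono_hom_def by blast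
  moreover have "C i \<noteq> 0\<^sub>m (dimv N i) (dimv ?P i)"
    using nz by (auto simp: dimv_proj_rep_sink[OF i])
  ultimately show ?thesis using iv unfolding nonzero_hom_def by blast
qed

theorem lemma5p6:
  fixes Q :: "('v,'e) quiver"
    and X Y :: "('v,'e,'k::field) rep"
    and f :: "'v \<Rightarrow> 'k mat"
  assumes "alg_closed TYPE('k)" and "finite_quiver Q" and "acyclic_quiver Q"
    and "rep_finite TYPE('k) Q"
    and "projective Q X" and "projective Q Y"
    and "hom Q X Y f" and "nonzero_hom Q X Y f"
  shows "\<exists>i j \<alpha> \<beta>. sink Q i \<and> source Q j \<and>
           hom Q (proj_rep Q i) X \<alpha> \<and> hom Q Y (proj_rep Q j) \<beta> \<and>
           nonzero_hom Q (proj_rep Q i) (proj_rep Q j) (comp_hom \<beta> (comp_hom f \<alpha>)) \<and>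
           mono_hom Q (proj_rep Q i) (proj_rep Q j) (comp_hom \<beta> (comp_hom f \<alpha>))"
proof -
  note fq = assms(2) and ac = assms(3) and pY = assms(6) and f = assms(7)
  have X: "is_rep Q X" and Y: "is_rep Q Y" using assms(5,6) unfolding projective_def by auto
  obtain i x where i: "sink Q i" and x: "x \<in> carrier_vec (dimv X i)"
    and fx: "f i *\<^sub>v x \<noteq> 0\<^sub>v (dimv Y i)"
    using nonzero_hom_nonzero_at_sink[OF fq ac pY f assms(8)] by blast
  have iv: "i \<in> verts Q" using i unfolding sink_def by simp
  have "f i *\<^sub>v x \<in> carrier_vec (dimv Y i)" using f iv x unfolding hom_def by auto
  interpret free_cover Q Y using fq ac Y by unfold_locales
  obtain j \<beta> where j: "source Q j" and \<beta>: "hom Q Y (proj_rep Q j) \<beta>"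
    and \<beta>fx: "\<beta> i *\<^sub>v (f i *\<^sub>v x) \<noteq> 0\<^sub>v (dimv (proj_rep Q j :: ('v,'e,'k) rep) i)"
    using projective_separated_by_source[OF pY iv \<open>f i *\<^sub>v x \<in> _\<close> fx] by blast
  let ?\<alpha> = "point_hom X i x"
  have \<alpha>: "hom Q (proj_rep Q i) X ?\<alpha>" by (rule hom_point_hom[OF i X])
  have C: "hom Q (proj_rep Q i) (proj_rep Q j) (comp_hom \<beta> (comp_hom f ?\<alpha>))"
    using hom_comp_hom[OF fq hom_comp_hom[OF fq \<alpha> f] \<beta>] .
  have "mono_hom Q (proj_rep Q i) (proj_rep Q j) (comp_hom \<beta> (comp_hom f ?\<alpha>)) \<and>
      nonzero_hom Q (proj_rep Q i) (proj_rep Q j) (comp_hom \<beta> (comp_hom f ?\<alpha>))"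
    using mono_nonzero_hom_from_sink_proj[OF i C] comp_hom_point_hom_unit_vec[OF f \<beta> iv x] \<beta>fx
    by simp
  then show ?thesis using i j \<alpha> \<beta> by blast
qed

end
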